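(* Let $S$ be a set and $s,s':I_m\to S$ be mirrored, and assume $(m_1,m_2)$ is a coincidence of $(s,s')$, with $m'=m_1+m_2<m$. Define $s_0,s_0':I_{m-m'}\to S$ by $s_0(j)=s(j+m_1)$ and $s_0'(j)=s'(j+m_1)$ (the restrictions of $s,s'$ to $I_m'=\{m_1+1,\ldots,m-m_2\}$, reindexed). Then $s_0$ and $s_0'$ are mirrored (as sequences of length $m-m'$).
   Context: $\mathcal{S}_k$ is the group of bijections of $I_k=\{1,\ldots,k\}$, with $\sigma\circ\tau$ meaning apply $\tau$ first. $\mathscr{T}_k=\{\sigma\in\mathcal{S}_k \mid \exists t:\ \sigma(1)>\cdots>\sigma(t)=1,\ \sigma(t)<\sigma(t+1)<\cdots<\sigma(k)\}$. $\mathcal{S}_k$ acts on sequences $s:I_k\to S$ by $\sigma s=s\circ\sigma^{-1}$. Two sequences $s,s':I_k\to S$ are mirrored if for every $\sigma\in\mathscr{T}_k$ there is $\sigma'\in\mathscr{T}_k$ with $\sigma s=\sigma's'$, and for every $\tau'\in\mathscr{T}_k$ there is $\tau\in\mathscr{T}_k$ with $\tau's'=\tau s$. For $s,s':I_m\to S$ and $A=s(1)$, a coincidence of $(s,s')$ is a pair $(m_1,m_2)$ of integers with $m_1>0$, $m_2\ge 0$, $m_1+m_2<m$, such that $s(i)=s'(i)=A$ for all $i\in\{1,\ldots,m_1\}\cup\{m-m_2+1,\ldots,m\}$, and $s(m_1+1)\ne A$, $s'(m_1+1)\ne A$, $s(m-m_2)\ne A$, $s'(m-m_2)\ne A$. 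*)

theory Defs
  imports "HOL-Combinatorics.Permutations"
begin

text \<open>Sequences s : I_k -> S are modelled as functions nat => 'a, only their values
on I_k = {1..k} being relevant.  Permutations of I_k are functions permuting {1..k}.\<close>

definition Ik :: "nat \<Rightarrow> nat set" where
  "Ik k = {1..k}"

definition Tk :: "nat \<Rightarrow> (nat \<Rightarrow> nat) set" where
  "Tk k = {\<sigma>. \<sigma> permutes Ik k \<and>
     (\<exists>t\<in>Ik k. \<sigma> t = 1 \<and>
        (\<forall>i j. 1 \<le> i \<and> i < j \<and> j \<le> t \<longrightarrow> \<sigma> i > \<sigma> j) \<and>
        (\<forall>i j. t \<le> i \<and> i < j \<and> j \<le> k \<longrightarrow> \<sigma> i < \<sigma> j))}"

definition act :: "(nat \<Rightarrow> nat) \<Rightarrow> (nat \<Rightarrow> 'a) \<Rightarrow> (nat \<Rightarrow> 'a)" where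
  "act \<sigma> s = s \<circ> inv \<sigma>"

definition seq_eq :: "nat \<Rightarrow> (nat \<Rightarrow> 'a) \<Rightarrow> (nat \<Rightarrow> 'a) \<Rightarrow> bool" where
  "seq_eq k s s' \<longleftrightarrow> (\<forall>i\<in>Ik k. s i = s' i)"

definition mirrored :: "nat \<Rightarrow> (nat \<Rightarrow> 'a) \<Rightarrow> (nat \<Rightarrow> 'a) \<Rightarrow> bool" where
  "mirrored k s s' \<longleftrightarrow>
     (\<forall>\<sigma>\<in>Tk k. \<exists>\<sigma>'\<in>Tk k. seq_eq k (act \<sigma> s) (act \<sigma>' s')) \<and>
     (\<forall>\<tau>'\<in>Tk k. \<exists>\<tau>\<in>Tk k. seq_eq k (act \<tau>' s') (act \<tau> s))"

definition coincidence :: "nat \<Rightarrow> (nat \<Rightarrow> 'a) \<Rightarrow> (nat \<Rightarrow> 'a) \<Rightarrow> nat \<Rightarrow> nat \<Rightarrow> bool" where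
  "coincidence m s s' m1 m2 \<longleftrightarrow>
     (let A = s 1 in
       m1 > 0 \<and> m1 + m2 < m \<and>
       (\<forall>i\<in>{1..m1} \<union> {m - m2 + 1..m}. s i = A \<and> s' i = A) \<and>
       s (m1 + 1) \<noteq> A \<and> s' (m1 + 1) \<noteq> A \<and> s (m - m2) \<noteq> A \<and> s' (m - m2) \<noteq> A)"

end

theory Submission
  imports Defs
begin

text \<open>Given \<sigma> \<in> T_k acting on the middle block, extend it to some \<sigma>' \<in> T_m that moves the
  two outer blocks (where s is constantly A) to the largest values.  Mirroredness yields
  \<tau> \<in> T_m with \<sigma>' s = \<tau> s'.  Every position where s' differs from A, in particular both ends
  m_1 + 1 and m - m_2 of the middle block, must then be sent by \<tau> into I_k; since elements
  of T_m are V-shaped, \<tau> maps the whole middle block into I_k, and its restriction there is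
  an element of T_k matching \<sigma> on the middle sequences.\<close>

lemma inj_on_endo_permutes:
  assumes "finite S" "f ` S \<subseteq> S" "inj_on f S" "\<And>x. x \<notin> S \<Longrightarrow> f x = x"
  shows "f permutes S"
  using assms endo_inj_surj[OF assms(1-3)] by (intro bij_imp_permutes) (auto simp: bij_betw_def)

lemma Tk_permutes: "\<sigma> \<in> Tk k \<Longrightarrow> \<sigma> permutes Ik k"
  by (simp add: Tk_def)

lemma seq_eq_act_iff:
  assumes "\<sigma> permutes Ik k" "\<tau> permutes Ik k"
  shows "seq_eq k (act \<sigma> s) (act \<tau> s') \<longleftrightarrow>
    (\<forall>i\<in>Ik k. \<forall>j\<in>Ik k. \<sigma> i = \<tau> j \<longrightarrow> s i = s' j)"
proof
  assume H: "seq_eq k (act \<sigma> s) (act \<tau> s')"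
  show "\<forall>i\<in>Ik k. \<forall>j\<in>Ik k. \<sigma> i = \<tau> j \<longrightarrow> s i = s' j"
  proof (intro ballI impI)
    fix i j assume "i \<in> Ik k" "j \<in> Ik k" and e: "\<sigma> i = \<tau> j"
    from \<open>i \<in> Ik k\<close> have "s (inv \<sigma> (\<sigma> i)) = s' (inv \<tau> (\<sigma> i))"
      using H permutes_in_image[OF assms(1)] by (simp add: seq_eq_def act_def)
    then show "s i = s' j" by (metis e permutes_inverses(2) assms)
  qed
next
  assume H: "\<forall>i\<in>Ik k. \<forall>j\<in>Ik k. \<sigma> i = \<tau> j \<longrightarrow> s i = s' j"
  show "seq_eq k (act \<sigma> s) (act \<tau> s')"
    unfolding seq_eq_def act_def
  proof
    fix p assume "p \<in> Ik k"
    then have "inv \<sigma> p \<in> Ik k" "inv \<tau> p \<in> Ik k"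
      using permutes_inv[OF assms(1)] permutes_inv[OF assms(2)] by (simp_all add: permutes_in_image)
    moreover have "\<sigma> (inv \<sigma> p) = \<tau> (inv \<tau> p)"
      using permutes_inverses(1)[OF assms(1)] permutes_inverses(1)[OF assms(2)] by simp
    ultimately show "(s \<circ> inv \<sigma>) p = (s' \<circ> inv \<tau>) p" using H by simp
  qed
qed

lemma Tk_le_max_ends:
  assumes "\<tau> \<in> Tk k" "1 \<le> a" "a \<le> j" "j \<le> b" "b \<le> k"
  shows "\<tau> j \<le> max (\<tau> a) (\<tau> b)"
proof -
  obtain t where dec: "\<And>i j. 1 \<le> i \<Longrightarrow> i < j \<Longrightarrow> j \<le> t \<Longrightarrow> \<tau> j < \<tau> i"
    and inc: "\<And>i j. t \<le> i \<Longrightarrow> i < j \<Longrightarrow> j \<le> k \<Longrightarrow> \<tau> i < \<tau> j"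
    using assms(1) unfolding Tk_def by blast
  show ?thesis
  proof (cases "j \<le> t")
    case True
    then have "\<tau> j \<le> \<tau> a" using dec[of a j] assms by (cases "a = j") auto
    then show ?thesis by simp
  next
    case False
    then have "\<tau> j \<le> \<tau> b" using inc[of j b] assms by (cases "b = j") auto
    then show ?thesis by simp
  qed
qed

text \<open>Puts \<sigma> in the middle of I_(a+k+b): the first a positions take the largest values in
  decreasing order and the last b positions take k+1, ..., k+b, which keeps the V-shape.\<close>

definition pad_perm :: "nat \<Rightarrow> nat \<Rightarrow> nat \<Rightarrow> (nat \<Rightarrow> nat) \<Rightarrow> nat \<Rightarrow> nat" where
  "pad_perm a k b \<sigma> i =
    (if 1 \<le> i \<and> i \<le> a then a + k + b + 1 - i
     else if a < i \<and> i \<le> a + k then \<sigma> (i - a)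
     else if a + k < i \<and> i \<le> a + k + b then i - a
     else i)"

lemma pad_perm_Tk:
  assumes \<sigma>: "\<sigma> \<in> Tk k"
  shows "pad_perm a k b \<sigma> \<in> Tk (a + k + b)"
proof -
  let ?n = "a + k + b" and ?p = "pad_perm a k b \<sigma>"
  have perm: "\<sigma> permutes {1..k}" using \<sigma> by (simp add: Tk_def Ik_def)
  obtain t where t: "1 \<le> t" "t \<le> k" "\<sigma> t = 1"
    and dec: "\<And>i j. 1 \<le> i \<Longrightarrow> i < j \<Longrightarrow> j \<le> t \<Longrightarrow> \<sigma> j < \<sigma> i"
    and inc: "\<And>i j. t \<le> i \<Longrightarrow> i < j \<Longrightarrow> j \<le> k \<Longrightarrow> \<sigma> i < \<sigma> j"
    using \<sigma> unfolding Tk_def Ik_def by fastforce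
  have mid: "1 \<le> \<sigma> (i - a) \<and> \<sigma> (i - a) \<le> k" if "a < i" "i \<le> a + k" for i
    using permutes_in_image[OF perm, of "i - a"] that by auto
  have "?p i \<in> {1..?n}" if "i \<in> {1..?n}" for i
    using that mid[of i] by (auto simp: pad_perm_def)
  then have "?p ` {1..?n} \<subseteq> {1..?n}" by blast
  moreover have "inj_on ?p {1..?n}"
  proof (rule inj_onI)
    fix i j assume "i \<in> {1..?n}" "j \<in> {1..?n}" "?p i = ?p j"
    then show "i = j"
      using mid[of i] mid[of j] permutes_inj[OF perm, THEN inj_eq, of "i - a" "j - a"]
      by (auto simp: pad_perm_def split: if_splits)
  qed
  ultimately have "?p permutes Ik ?n"
    unfolding Ik_def by (intro inj_on_endo_permutes) (auto simp: pad_perm_def)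
  moreover have "?p i > ?p j" if "1 \<le> i" "i < j" "j \<le> t + a" for i j
    using that t mid[of i] mid[of j] dec[of "i - a" "j - a"] by (auto simp: pad_perm_def)
  moreover have "?p i < ?p j" if "t + a \<le> i" "i < j" "j \<le> ?n" for i j
    using that t mid[of i] mid[of j] inc[of "i - a" "j - a"] by (auto simp: pad_perm_def)
  moreover have "t + a \<in> Ik ?n" "?p (t + a) = 1"
    using t by (auto simp: Ik_def pad_perm_def)
  ultimately show ?thesis unfolding Tk_def by blast
qed

lemma pad_perm_le_iff:
  assumes "\<sigma> \<in> Tk k" "i \<in> Ik (a + k + b)"
  shows "pad_perm a k b \<sigma> i \<le> k \<longleftrightarrow> a < i \<and> i \<le> a + k"
  using assms permutes_in_image[OF Tk_permutes[OF assms(1)], of "i - a"]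
  by (auto simp: pad_perm_def Ik_def)

lemma pad_perm_middle: "j \<in> Ik k \<Longrightarrow> pad_perm a k b \<sigma> (j + a) = \<sigma> j"
  by (simp add: pad_perm_def Ik_def)

definition middle_perm :: "nat \<Rightarrow> nat \<Rightarrow> (nat \<Rightarrow> nat) \<Rightarrow> nat \<Rightarrow> nat" where
  "middle_perm a k \<tau> j = (if j \<in> Ik k then \<tau> (j + a) else j)"

lemma middle_perm_Tk:
  assumes \<tau>: "\<tau> \<in> Tk m" and "0 < k" "a + k \<le> m"
    and ends: "\<tau> (a + 1) \<le> k" "\<tau> (a + k) \<le> k"
  shows "middle_perm a k \<tau> \<in> Tk k"
proof -
  let ?r = "middle_perm a k \<tau>"
  have perm: "\<tau> permutes {1..m}" using \<tau> by (simp add: Tk_def Ik_def)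
  have inj: "\<tau> x = \<tau> y \<longleftrightarrow> x = y" for x y
    using permutes_inj[OF perm] by (simp add: inj_eq)
  obtain t where t: "\<tau> t = 1"
    and dec: "\<And>i j. 1 \<le> i \<Longrightarrow> i < j \<Longrightarrow> j \<le> t \<Longrightarrow> \<tau> j < \<tau> i"
    and inc: "\<And>i j. t \<le> i \<Longrightarrow> i < j \<Longrightarrow> j \<le> m \<Longrightarrow> \<tau> i < \<tau> j"
    using \<tau> unfolding Tk_def by blast
  have mid: "\<tau> (j + a) \<in> Ik k" if "j \<in> Ik k" for j
  proof -
    have "\<tau> (j + a) \<le> max (\<tau> (a + 1)) (\<tau> (a + k))"
      using that assms by (intro Tk_le_max_ends) (auto simp: Ik_def)
    moreover have "\<tau> (j + a) \<in> {1..m}"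
      using that assms permutes_in_image[OF perm] by (auto simp: Ik_def)
    ultimately show ?thesis using ends by (auto simp: Ik_def)
  qed
  have "?r ` Ik k \<subseteq> Ik k" using mid by (auto simp: middle_perm_def)
  moreover have "inj_on ?r (Ik k)" by (rule inj_onI) (simp add: middle_perm_def inj)
  ultimately have p: "?r permutes Ik k"
    by (intro inj_on_endo_permutes) (auto simp: middle_perm_def Ik_def)
  moreover obtain j0 where j0: "j0 \<in> Ik k" "?r j0 = 1"
  proof -
    have "1 \<in> ?r ` Ik k" using permutes_image[OF p] \<open>0 < k\<close> by (simp add: Ik_def)
    then show ?thesis using that by (metis imageE)
  qed
  moreover have tj: "t = j0 + a"
    using j0 t inj[of t "j0 + a"] by (simp add: middle_perm_def)
  moreover have "?r j < ?r i" if "1 \<le> i" "i < j" "j \<le> j0" for i j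
    using that j0 dec[of "i + a" "j + a"] by (simp add: tj middle_perm_def Ik_def)
  moreover have "?r i < ?r j" if "j0 \<le> i" "i < j" "j \<le> k" for i j
    using that j0 assms inc[of "i + a" "j + a"] by (simp add: tj middle_perm_def Ik_def)
  ultimately show ?thesis unfolding Tk_def by blast
qed

definition mirrors_into :: "nat \<Rightarrow> (nat \<Rightarrow> 'a) \<Rightarrow> (nat \<Rightarrow> 'a) \<Rightarrow> bool" where
  "mirrors_into k s s' \<longleftrightarrow> (\<forall>\<sigma>\<in>Tk k. \<exists>\<sigma>'\<in>Tk k. seq_eq k (act \<sigma> s) (act \<sigma>' s'))"

lemma mirrored_iff_mirrors_into: "mirrored k s s' \<longleftrightarrow> mirrors_into k s s' \<and> mirrors_into k s' s"
  by (simp add: mirrored_def mirrors_into_def)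

lemma mirrors_into_middle:
  assumes H: "mirrors_into (a + k + b) s s'"
    and outer: "\<And>i. i \<in> {1..a} \<union> {a + k + 1..a + k + b} \<Longrightarrow> s i = A"
    and ends: "s' (a + 1) \<noteq> A" "s' (a + k) \<noteq> A"
  shows "mirrors_into k (\<lambda>j. s (j + a)) (\<lambda>j. s' (j + a))"
  unfolding mirrors_into_def
proof
  fix \<sigma> assume \<sigma>: "\<sigma> \<in> Tk k"
  let ?n = "a + k + b" and ?p = "pad_perm a k b \<sigma>"
  have "0 < k" using \<sigma> by (auto simp: Tk_def Ik_def)
  have p: "?p \<in> Tk ?n" using \<sigma> by (rule pad_perm_Tk)
  then obtain \<tau> where \<tau>: "\<tau> \<in> Tk ?n" and "seq_eq ?n (act ?p s) (act \<tau> s')"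
    using H by (auto simp: mirrors_into_def)
  then have match: "\<And>i j. i \<in> Ik ?n \<Longrightarrow> j \<in> Ik ?n \<Longrightarrow> ?p i = \<tau> j \<Longrightarrow> s i = s' j"
    using seq_eq_act_iff[OF Tk_permutes[OF p] Tk_permutes[OF \<tau>]] by blast
  have small: "\<tau> j \<le> k" if j: "j \<in> Ik ?n" and "s' j \<noteq> A" for j
  proof (rule ccontr)
    assume "\<not> \<tau> j \<le> k"
    obtain i where i: "i \<in> Ik ?n" "?p i = \<tau> j"
      using j permutes_in_image[OF Tk_permutes[OF \<tau>]] permutes_image[OF Tk_permutes[OF p]]
      by (metis imageE)
    have "\<not> (a < i \<and> i \<le> a + k)"
      using pad_perm_le_iff[OF \<sigma> i(1)] i(2) \<open>\<not> \<tau> j \<le> k\<close> by simp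
    then have "s i = A" using i outer by (auto simp: Ik_def)
    then show False using match[OF i(1) j i(2)] \<open>s' j \<noteq> A\<close> by simp
  qed
  have r: "middle_perm a k \<tau> \<in> Tk k"
    using \<open>0 < k\<close> ends by (intro middle_perm_Tk[OF \<tau>] small) (auto simp: Ik_def)
  have "seq_eq k (act \<sigma> (\<lambda>j. s (j + a))) (act (middle_perm a k \<tau>) (\<lambda>j. s' (j + a)))"
    unfolding seq_eq_act_iff[OF Tk_permutes[OF \<sigma>] Tk_permutes[OF r]]
  proof (intro ballI impI)
    fix i j assume "i \<in> Ik k" "j \<in> Ik k" "\<sigma> i = middle_perm a k \<tau> j"
    then show "s (i + a) = s' (j + a)"
      by (intro match) (auto simp: Ik_def pad_perm_middle middle_perm_def)
  qed
  with r show "\<exists>\<sigma>'\<in>Tk k. seq_eq k (act \<sigma> (\<lambda>j. s (j + a))) (act \<sigma>' (\<lambda>j. s' (j + a)))"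
    by blast
qed

theorem mainTheorem13:
  fixes s s' :: "nat \<Rightarrow> 'a" and m m1 m2 :: nat
  assumes "mirrored m s s'"
    and "coincidence m s s' m1 m2"
  shows "mirrored (m - (m1 + m2)) (\<lambda>j. s (j + m1)) (\<lambda>j. s' (j + m1))"
proof -
  let ?A = "s 1"
  have coin: "m1 + m2 < m" "\<forall>i\<in>{1..m1} \<union> {m - m2 + 1..m}. s i = ?A \<and> s' i = ?A"
    "s (m1 + 1) \<noteq> ?A" "s' (m1 + 1) \<noteq> ?A" "s (m - m2) \<noteq> ?A" "s' (m - m2) \<noteq> ?A"
    using assms(2) unfolding coincidence_def Let_def by blast+
  define k where "k = m - (m1 + m2)"
  have m: "m = m1 + k + m2" using coin(1) by (simp add: k_def)
  then have mirr: "mirrors_into (m1 + k + m2) s s'" "mirrors_into (m1 + k + m2) s' s"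
    using assms(1) by (simp_all add: mirrored_iff_mirrors_into)
  have "mirrors_into k (\<lambda>j. s (j + m1)) (\<lambda>j. s' (j + m1))"
    using coin by (intro mirrors_into_middle[OF mirr(1), of ?A]) (auto simp: m)
  moreover have "mirrors_into k (\<lambda>j. s' (j + m1)) (\<lambda>j. s (j + m1))"
    using coin by (intro mirrors_into_middle[OF mirr(2), of ?A]) (auto simp: m)
  ultimately show ?thesis by (simp add: mirrored_iff_mirrors_into k_def)
qed

end
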